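(* Let $(A,\mu,\alpha,\beta)$ be a BiHom-associative algebra (with $\mu(a\otimes b)=a\cdot b$) and let $r=\sum_i x_i\otimes y_i\in A\otimes A$ be such that $(\alpha\otimes\alpha)(r)=r=(\beta\otimes\beta)(r)$ and $a\bullet A(r)=A(r)\bullet a$ for all $a\in A$. Define $\Delta_r:A\to A\otimes A$ by $\Delta_r(a)=\sum_i\alpha(x_i)\otimes y_i\cdot a-\sum_i a\cdot x_i\otimes\beta(y_i)$. Then $(A,\mu,\Delta_r,\alpha,\beta,\psi=\beta,\omega=\alpha)$ is an infinitesimal BiHom-bialgebra.
   Context: Work over a field. A BiHom-associative algebra is a 4-tuple $(A,\mu,\alpha,\beta)$ with $\alpha,\beta$ commuting linear maps, multiplicative for $\mu$, and $\alpha(x)\cdot(y\cdot z)=(x\cdot y)\cdot\beta(z)$. Actions of $A$ on $A\otimes A\otimes A$: $a\bullet(x\otimes y\otimes z)=\alpha(a)\cdot x\otimes\beta(y)\otimes\beta(z)$ and $(x\otimes y\otimes z)\bullet a=\alpha(x)\otimes\alpha(y)\otimes z\cdot\beta(a)$. With $r=\sum_i x_i\otimes y_i$: $r_{12}r_{23}=\sum_{i,j}\alpha(x_i)\otimes y_i\cdot x_j\otimes\beta(y_j)$, $r_{13}r_{12}=\sum_{i,j}x_i\cdot x_j\otimes\beta(y_j)\otimes\beta(y_i)$, $r_{23}r_{13}=\sum_{i,j}\alpha(x_i)\otimes\alpha(x_j)\otimes y_j\cdot y_i$, $A(r)=r_{13}r_{12}-r_{12}r_{23}+r_{23}r_{13}$.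 A BiHom-coassociative coalgebra is $(C,\Delta,\psi,\omega)$ with $\psi\omega=\omega\psi$, $(\psi\otimes\psi)\Delta=\Delta\psi$, $(\omega\otimes\omega)\Delta=\Delta\omega$ and $(\Delta\otimes\psi)\Delta=(\omega\otimes\Delta)\Delta$. An infinitesimal BiHom-bialgebra is a 7-tuple $(A,\mu,\Delta,\alpha,\beta,\psi,\omega)$ such that $(A,\mu,\alpha,\beta)$ is BiHom-associative, $(A,\Delta,\psi,\omega)$ is BiHom-coassociative, and for all $a,b$ (with $\Delta(a)=a_1\otimes a_2$): $\Delta(a\cdot b)=\omega(a)\cdot b_1\otimes\beta(b_2)+\alpha(a_1)\otimes a_2\cdot\psi(b)$; $\alpha\psi=\psi\alpha$, $\alpha\omega=\omega\alpha$, $\beta\psi=\psi\beta$, $\beta\omega=\omega\beta$; $(\alpha\otimes\alpha)\Delta=\Delta\alpha$, $(\beta\otimes\beta)\Delta=\Delta\beta$; $\psi,\omega$ multiplicative for $\mu$. *)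

theory Defs
  imports Complex_Main
begin

text \<open>
  Elements of A \<otimes> A (resp. A \<otimes> A \<otimes> A) are represented by finite formal sums of simple
  tensors, i.e. lists of pairs (resp. triples).  Two such formal sums denote the same tensor
  iff every bilinear (resp. trilinear) form with values in the field 'k takes the same value
  on them (over a field, linear functionals on A \<otimes> A are exactly the bilinear forms, and they
  separate points of A \<otimes> A).
\<close>

type_synonym 'a tensor2 = "('a \<times> 'a) list"
type_synonym 'a tensor3 = "('a \<times> 'a \<times> 'a) list"

definition lin :: "('k::field \<Rightarrow> 'a::ab_group_add \<Rightarrow> 'a) \<Rightarrow> ('a \<Rightarrow> 'a) \<Rightarrow> bool" where
  "lin sc f \<longleftrightarrow> Vector_Spaces.linear sc sc f"

definition bilinear_form :: "('k::field \<Rightarrow> 'a::ab_group_add \<Rightarrow> 'a) \<Rightarrow> ('a \<Rightarrow> 'a \<Rightarrow> 'k) \<Rightarrow> bool" where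
  "bilinear_form sc \<phi> \<longleftrightarrow>
     (\<forall>x. Vector_Spaces.linear sc (*) (\<phi> x)) \<and> (\<forall>y. Vector_Spaces.linear sc (*) (\<lambda>x. \<phi> x y))"

definition trilinear_form :: "('k::field \<Rightarrow> 'a::ab_group_add \<Rightarrow> 'a) \<Rightarrow> ('a \<Rightarrow> 'a \<Rightarrow> 'a \<Rightarrow> 'k) \<Rightarrow> bool" where
  "trilinear_form sc \<phi> \<longleftrightarrow>
     (\<forall>y z. Vector_Spaces.linear sc (*) (\<lambda>x. \<phi> x y z)) \<and>
     (\<forall>x z. Vector_Spaces.linear sc (*) (\<lambda>y. \<phi> x y z)) \<and>
     (\<forall>x y. Vector_Spaces.linear sc (*) (\<lambda>z. \<phi> x y z))"

definition teq2 :: "('k::field \<Rightarrow> 'a::ab_group_add \<Rightarrow> 'a) \<Rightarrow> 'a tensor2 \<Rightarrow> 'a tensor2 \<Rightarrow> bool" where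
  "teq2 sc s t \<longleftrightarrow> (\<forall>\<phi>. bilinear_form sc \<phi> \<longrightarrow>
     (\<Sum>(x,y)\<leftarrow>s. \<phi> x y) = (\<Sum>(x,y)\<leftarrow>t. \<phi> x y))"

definition teq3 :: "('k::field \<Rightarrow> 'a::ab_group_add \<Rightarrow> 'a) \<Rightarrow> 'a tensor3 \<Rightarrow> 'a tensor3 \<Rightarrow> bool" where
  "teq3 sc s t \<longleftrightarrow> (\<forall>\<phi>. trilinear_form sc \<phi> \<longrightarrow>
     (\<Sum>(x,y,z)\<leftarrow>s. \<phi> x y z) = (\<Sum>(x,y,z)\<leftarrow>t. \<phi> x y z))"

definition bihom_assoc_algebra ::
  "('k::field \<Rightarrow> 'a::ab_group_add \<Rightarrow> 'a) \<Rightarrow> ('a \<Rightarrow> 'a \<Rightarrow> 'a) \<Rightarrow> ('a \<Rightarrow> 'a) \<Rightarrow> ('a \<Rightarrow> 'a) \<Rightarrow> bool" where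
  "bihom_assoc_algebra sc mu al be \<longleftrightarrow>
     vector_space sc \<and>
     (\<forall>x. lin sc (mu x)) \<and> (\<forall>y. lin sc (\<lambda>x. mu x y)) \<and>
     lin sc al \<and> lin sc be \<and>
     (\<forall>x. al (be x) = be (al x)) \<and>
     (\<forall>x y. al (mu x y) = mu (al x) (al y)) \<and>
     (\<forall>x y. be (mu x y) = mu (be x) (be y)) \<and>
     (\<forall>x y z. mu (al x) (mu y z) = mu (mu x y) (be z))"

definition bihom_coassoc_coalgebra ::
  "('k::field \<Rightarrow> 'a::ab_group_add \<Rightarrow> 'a) \<Rightarrow> ('a \<Rightarrow> 'a tensor2) \<Rightarrow> ('a \<Rightarrow> 'a) \<Rightarrow> ('a \<Rightarrow> 'a) \<Rightarrow> bool" where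
  "bihom_coassoc_coalgebra sc De psi om \<longleftrightarrow>
     vector_space sc \<and>
     (\<forall>c a b. teq2 sc (De (sc c a + b)) ([(sc c x, y). (x,y) \<leftarrow> De a] @ De b)) \<and>
     lin sc psi \<and> lin sc om \<and>
     (\<forall>x. psi (om x) = om (psi x)) \<and>
     (\<forall>a. teq2 sc [(psi x, psi y). (x,y) \<leftarrow> De a] (De (psi a))) \<and>
     (\<forall>a. teq2 sc [(om x, om y). (x,y) \<leftarrow> De a] (De (om a))) \<and>
     (\<forall>a. teq3 sc [(u, v, psi y). (x,y) \<leftarrow> De a, (u,v) \<leftarrow> De x]
                  [(om x, u, v). (x,y) \<leftarrow> De a, (u,v) \<leftarrow> De y])"

definition inf_bihom_bialgebra ::
  "('k::field \<Rightarrow> 'a::ab_group_add \<Rightarrow> 'a) \<Rightarrow> ('a \<Rightarrow> 'a \<Rightarrow> 'a) \<Rightarrow> ('a \<Rightarrow> 'a tensor2) \<Rightarrow>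
   ('a \<Rightarrow> 'a) \<Rightarrow> ('a \<Rightarrow> 'a) \<Rightarrow> ('a \<Rightarrow> 'a) \<Rightarrow> ('a \<Rightarrow> 'a) \<Rightarrow> bool" where
  "inf_bihom_bialgebra sc mu De al be psi om \<longleftrightarrow>
     bihom_assoc_algebra sc mu al be \<and>
     bihom_coassoc_coalgebra sc De psi om \<and>
     (\<forall>a b. teq2 sc (De (mu a b))
        ([(mu (om a) b1, be b2). (b1,b2) \<leftarrow> De b] @ [(al a1, mu a2 (psi b)). (a1,a2) \<leftarrow> De a])) \<and>
     (\<forall>x. al (psi x) = psi (al x)) \<and> (\<forall>x. al (om x) = om (al x)) \<and>
     (\<forall>x. be (psi x) = psi (be x)) \<and> (\<forall>x. be (om x) = om (be x)) \<and>
     (\<forall>a. teq2 sc [(al x, al y). (x,y) \<leftarrow> De a] (De (al a))) \<and>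
     (\<forall>a. teq2 sc [(be x, be y). (x,y) \<leftarrow> De a] (De (be a))) \<and>
     (\<forall>x y. psi (mu x y) = mu (psi x) (psi y)) \<and>
     (\<forall>x y. om (mu x y) = mu (om x) (om y))"

text \<open>The tensor A(r) = r13 r12 - r12 r23 + r23 r13 for r = sum_i x_i \<otimes> y_i.\<close>

definition r12r23 :: "('a \<Rightarrow> 'a \<Rightarrow> 'a) \<Rightarrow> ('a \<Rightarrow> 'a) \<Rightarrow> ('a \<Rightarrow> 'a) \<Rightarrow> 'a tensor2 \<Rightarrow> 'a tensor3" where
  "r12r23 mu al be r = [(al xi, mu yi xj, be yj). (xi,yi) \<leftarrow> r, (xj,yj) \<leftarrow> r]"

definition r13r12 :: "('a \<Rightarrow> 'a \<Rightarrow> 'a) \<Rightarrow> ('a \<Rightarrow> 'a) \<Rightarrow> ('a \<Rightarrow> 'a) \<Rightarrow> 'a tensor2 \<Rightarrow> 'a tensor3" where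
  "r13r12 mu al be r = [(mu xi xj, be yj, be yi). (xi,yi) \<leftarrow> r, (xj,yj) \<leftarrow> r]"

definition r23r13 :: "('a \<Rightarrow> 'a \<Rightarrow> 'a) \<Rightarrow> ('a \<Rightarrow> 'a) \<Rightarrow> ('a \<Rightarrow> 'a) \<Rightarrow> 'a tensor2 \<Rightarrow> 'a tensor3" where
  "r23r13 mu al be r = [(al xi, al xj, mu yj yi). (xi,yi) \<leftarrow> r, (xj,yj) \<leftarrow> r]"

definition AYBE :: "('a::ab_group_add \<Rightarrow> 'a \<Rightarrow> 'a) \<Rightarrow> ('a \<Rightarrow> 'a) \<Rightarrow> ('a \<Rightarrow> 'a) \<Rightarrow> 'a tensor2 \<Rightarrow> 'a tensor3" where
  "AYBE mu al be r = r13r12 mu al be r @ [(- x, y, z). (x,y,z) \<leftarrow> r12r23 mu al be r]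
                     @ r23r13 mu al be r"

definition act_left :: "('a \<Rightarrow> 'a \<Rightarrow> 'a) \<Rightarrow> ('a \<Rightarrow> 'a) \<Rightarrow> ('a \<Rightarrow> 'a) \<Rightarrow> 'a \<Rightarrow> 'a tensor3 \<Rightarrow> 'a tensor3" where
  "act_left mu al be a t = [(mu (al a) x, be y, be z). (x,y,z) \<leftarrow> t]"

definition act_right :: "('a \<Rightarrow> 'a \<Rightarrow> 'a) \<Rightarrow> ('a \<Rightarrow> 'a) \<Rightarrow> ('a \<Rightarrow> 'a) \<Rightarrow> 'a tensor3 \<Rightarrow> 'a \<Rightarrow> 'a tensor3" where
  "act_right mu al be t a = [(al x, al y, mu z (be a)). (x,y,z) \<leftarrow> t]"

definition Delta_r :: "('a::ab_group_add \<Rightarrow> 'a \<Rightarrow> 'a) \<Rightarrow> ('a \<Rightarrow> 'a) \<Rightarrow> ('a \<Rightarrow> 'a) \<Rightarrow> 'a tensor2 \<Rightarrow> 'a \<Rightarrow> 'a tensor2" where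
  "Delta_r mu al be r a = [(al x, mu y a). (x,y) \<leftarrow> r] @ [(- mu a x, be y). (x,y) \<leftarrow> r]"

end

theory Submission
  imports Defs
begin

(* All identities are tested against bilinear or trilinear forms, so they become identities
   between finite sums over the legs of r.  Invariance of r under al\<otimes>al and be\<otimes>be allows
   inserting or removing al and be on both legs at once, and BiHom-associativity then moves
   the products between legs; this gives the compatibility condition and the commutation of
   Delta_r with al and be directly.  Expanding (Delta_r\<otimes>be) Delta_r a and
   (al\<otimes>Delta_r) Delta_r a gives four terms each: one term is common to both sides, and
   after these moves the remaining six are exactly the six terms of a\<bullet>A(r) and A(r)\<bullet>a,
   so BiHom-coassociativity reduces to a\<bullet>A(r) = A(r)\<bullet>a. *)

lemma linearD:
  assumes "Vector_Spaces.linear s1 s2 f"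
  shows "f (x + y) = f x + f y" "f (s1 c x) = s2 c (f x)" "f (- x) = - f x" "f (x - y) = f x - f y"
  using assms
  by (simp_all add: linear_iff_module_hom module_hom.add module_hom.scale module_hom.neg module_hom.diff)

lemma vector_space_field_mult: "vector_space ((*) :: 'k::field \<Rightarrow> 'k \<Rightarrow> 'k)"
  by (simp add: vector_space_def algebra_simps)

lemma bilinear_formD:
  assumes "bilinear_form sc \<phi>"
  shows "\<phi> (x + x') y = \<phi> x y + \<phi> x' y" "\<phi> x (y + y') = \<phi> x y + \<phi> x y'"
    "\<phi> (sc c x) y = c * \<phi> x y" "\<phi> x (sc c y) = c * \<phi> x y"
    "\<phi> (- x) y = - \<phi> x y" "\<phi> x (- y) = - \<phi> x y"
    "\<phi> (x - x') y = \<phi> x y - \<phi> x' y" "\<phi> x (y - y') = \<phi> x y - \<phi> x y'"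
  using assms unfolding bilinear_form_def
  by (auto dest: linearD[where f="\<lambda>x. \<phi> x y" for y] linearD[where f="\<phi> x" for x])

lemma bilinear_formI:
  assumes "vector_space sc"
    and "\<And>x x' y. \<phi> (x + x') y = \<phi> x y + \<phi> x' y" "\<And>x y y'. \<phi> x (y + y') = \<phi> x y + \<phi> x y'"
    and "\<And>c x y. \<phi> (sc c x) y = c * \<phi> x y" "\<And>c x y. \<phi> x (sc c y) = c * \<phi> x y"
  shows "bilinear_form sc \<phi>"
  using assms vector_space_field_mult unfolding bilinear_form_def Vector_Spaces.linear_iff by auto

lemma trilinear_formD:
  assumes "trilinear_form sc \<phi>"
  shows "\<phi> (x + x') y z = \<phi> x y z + \<phi> x' y z" "\<phi> x (y + y') z = \<phi> x y z + \<phi> x y' z"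
    "\<phi> x y (z + z') = \<phi> x y z + \<phi> x y z'"
    "\<phi> (sc c x) y z = c * \<phi> x y z" "\<phi> x (sc c y) z = c * \<phi> x y z" "\<phi> x y (sc c z) = c * \<phi> x y z"
    "\<phi> (- x) y z = - \<phi> x y z" "\<phi> x (- y) z = - \<phi> x y z" "\<phi> x y (- z) = - \<phi> x y z"
proof -
  have l1: "Vector_Spaces.linear sc (*) (\<lambda>x. \<phi> x y z)"
    and l2: "Vector_Spaces.linear sc (*) (\<lambda>y. \<phi> x y z)"
    and l3: "Vector_Spaces.linear sc (*) (\<phi> x y)" for x y z
    using assms by (simp_all add: trilinear_form_def)
  show "\<phi> (x + x') y z = \<phi> x y z + \<phi> x' y z" "\<phi> x (y + y') z = \<phi> x y z + \<phi> x y' z"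
    "\<phi> x y (z + z') = \<phi> x y z + \<phi> x y z'"
    "\<phi> (sc c x) y z = c * \<phi> x y z" "\<phi> x (sc c y) z = c * \<phi> x y z" "\<phi> x y (sc c z) = c * \<phi> x y z"
    "\<phi> (- x) y z = - \<phi> x y z" "\<phi> x (- y) z = - \<phi> x y z" "\<phi> x y (- z) = - \<phi> x y z"
    using linearD[OF l1[of y z]] linearD[OF l2[of x z]] linearD[OF l3[of x y]] by simp_all
qed

lemma sum_list_map_concat: "(\<Sum>x\<leftarrow>concat xss. f x) = (\<Sum>xs\<leftarrow>xss. \<Sum>x\<leftarrow>xs. f x)"
  by (induction xss) auto

lemma sum_list_map_uminus: "(\<Sum>x\<leftarrow>xs. - f x) = - (\<Sum>x\<leftarrow>xs. (f x :: 'c::ab_group_add))"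
  by (induction xs) auto

lemma sum_list_map_swap:
  "(\<Sum>x\<leftarrow>xs. \<Sum>y\<leftarrow>ys. f x y) = (\<Sum>y\<leftarrow>ys. \<Sum>x\<leftarrow>xs. (f x y :: 'c::comm_monoid_add))"
  by (induction xs) (simp_all add: sum_list_addf)

lemmas sum_list_expand =
  sum_list_map_concat sum_list_addf sum_list_subtractf sum_list_map_uminus sum_list_const_mult
  case_prod_unfold comp_def

lemma teq2_map_invariant:
  assumes "teq2 sc [(f x, f y). (x, y) \<leftarrow> r] r" and "bilinear_form sc \<phi>"
  shows "(\<Sum>q\<leftarrow>r. \<phi> (f (fst q)) (f (snd q))) = (\<Sum>q\<leftarrow>r. \<phi> (fst q) (snd q))"
  using assms unfolding teq2_def by (simp add: comp_def case_prod_unfold)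

lemma teq2_map_invariant_nested:
  assumes "teq2 sc [(f x, f y). (x, y) \<leftarrow> r] r" and "\<And>p. bilinear_form sc (\<phi> p)"
  shows "(\<Sum>p\<leftarrow>ps. \<Sum>q\<leftarrow>r. \<phi> p (f (fst q)) (f (snd q))) = (\<Sum>p\<leftarrow>ps. \<Sum>q\<leftarrow>r. \<phi> p (fst q) (snd q))"
  using teq2_map_invariant[OF assms(1) assms(2)] by simp

definition eval3 :: "('a \<Rightarrow> 'a \<Rightarrow> 'a \<Rightarrow> 'k::comm_monoid_add) \<Rightarrow> 'a tensor3 \<Rightarrow> 'k" where
  "eval3 \<phi> t = (\<Sum>(x, y, z)\<leftarrow>t. \<phi> x y z)"

lemma teq3_iff_eval3: "teq3 sc s t \<longleftrightarrow> (\<forall>\<phi>. trilinear_form sc \<phi> \<longrightarrow> eval3 \<phi> s = eval3 \<phi> t)"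
  by (simp add: teq3_def eval3_def)

locale bihom_r_matrix =
  fixes sc :: "'k::field \<Rightarrow> 'a::ab_group_add \<Rightarrow> 'a" and mu :: "'a \<Rightarrow> 'a \<Rightarrow> 'a"
    and al be :: "'a \<Rightarrow> 'a" and r :: "'a tensor2"
  assumes algebra: "bihom_assoc_algebra sc mu al be"
    and r_al_invariant: "teq2 sc [(al x, al y). (x, y) \<leftarrow> r] r"
    and r_be_invariant: "teq2 sc [(be x, be y). (x, y) \<leftarrow> r] r"
    and AYBE_balanced:
      "\<And>a. teq3 sc (act_left mu al be a (AYBE mu al be r)) (act_right mu al be (AYBE mu al be r) a)"
begin

abbreviation Delta :: "'a \<Rightarrow> 'a tensor2" where
  "Delta \<equiv> Delta_r mu al be r"

lemma vector_space: "vector_space sc"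
  using algebra by (simp add: bihom_assoc_algebra_def)

lemma linear_maps: "lin sc (mu x)" "lin sc (\<lambda>y. mu y x)" "lin sc al" "lin sc be"
  using algebra by (simp_all add: bihom_assoc_algebra_def)

lemma mu_linear [simp]:
  "mu (x + y) z = mu x z + mu y z" "mu x (y + z) = mu x y + mu x z"
  "mu (sc c x) y = sc c (mu x y)" "mu x (sc c y) = sc c (mu x y)"
  "mu (- x) y = - mu x y" "mu x (- y) = - mu x y"
  using linearD[OF linear_maps(1)[unfolded lin_def]] linearD[OF linear_maps(2)[unfolded lin_def]]
  by auto

lemma al_linear [simp]: "al (x + y) = al x + al y" "al (sc c x) = sc c (al x)" "al (- x) = - al x"
  using linearD[OF linear_maps(3)[unfolded lin_def]] by auto

lemma be_linear [simp]: "be (x + y) = be x + be y" "be (sc c x) = sc c (be x)" "be (- x) = - be x"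
  using linearD[OF linear_maps(4)[unfolded lin_def]] by auto

lemma al_be_commute [simp]: "al (be x) = be (al x)"
  and al_mu [simp]: "al (mu x y) = mu (al x) (al y)"
  and be_mu [simp]: "be (mu x y) = mu (be x) (be y)"
  and bihom_assoc: "mu (al x) (mu y z) = mu (mu x y) (be z)"
  using algebra by (simp_all add: bihom_assoc_algebra_def)

lemmas bilinear_form_scI = bilinear_formI[OF vector_space]

lemmas sum_r_al_invariant = teq2_map_invariant[OF r_al_invariant]
  and sum_r_be_invariant = teq2_map_invariant[OF r_be_invariant]
  and sum_r_al_invariant_nested = teq2_map_invariant_nested[OF r_al_invariant]
  and sum_r_be_invariant_nested = teq2_map_invariant_nested[OF r_be_invariant]

lemma eval3_act_left_AYBE:
  assumes "trilinear_form sc \<phi>"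
  shows "eval3 \<phi> (act_left mu al be a (AYBE mu al be r)) =
    eval3 \<phi> (act_left mu al be a (r13r12 mu al be r)) - eval3 \<phi> (act_left mu al be a (r12r23 mu al be r))
    + eval3 \<phi> (act_left mu al be a (r23r13 mu al be r))"
  using trilinear_formD[OF assms] by (simp add: eval3_def AYBE_def act_left_def sum_list_expand)

lemma eval3_act_right_AYBE:
  assumes "trilinear_form sc \<phi>"
  shows "eval3 \<phi> (act_right mu al be (AYBE mu al be r) a) =
    eval3 \<phi> (act_right mu al be (r13r12 mu al be r) a) - eval3 \<phi> (act_right mu al be (r12r23 mu al be r) a)
    + eval3 \<phi> (act_right mu al be (r23r13 mu al be r) a)"
  using trilinear_formD[OF assms] by (simp add: eval3_def AYBE_def act_right_def sum_list_expand)

lemma eval3_Delta_coassoc_left: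
  assumes \<phi>: "trilinear_form sc \<phi>"
  shows "eval3 \<phi> [(u, v, be y). (x, y) \<leftarrow> Delta a, (u, v) \<leftarrow> Delta x] =
    eval3 \<phi> (act_left mu al be a (r13r12 mu al be r)) - eval3 \<phi> (act_right mu al be (r13r12 mu al be r) a)
    + eval3 \<phi> (act_right mu al be (r12r23 mu al be r) a)
    - eval3 \<phi> [(al (al x), mu (mu y a) u, be v). (x, y) \<leftarrow> r, (u, v) \<leftarrow> r]"
proof -
  note trilinear_formD[OF \<phi>, simp]
  have L1: "(\<Sum>p\<leftarrow>r. \<Sum>q\<leftarrow>r. \<phi> (al (fst q)) (mu (snd q) (al (fst p))) (mu (be (snd p)) (be a)))
    = (\<Sum>p\<leftarrow>r. \<Sum>q\<leftarrow>r. \<phi> (al (al (fst p))) (mu (al (snd p)) (al (fst q))) (mu (be (snd q)) (be a)))"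
  proof -
    have "bilinear_form sc (\<lambda>x y. \<Sum>q\<leftarrow>r. \<phi> (al x) (mu y (al (fst q))) (mu (be (snd q)) (be a)))"
      by (rule bilinear_form_scI) (simp_all add: sum_list_addf sum_list_const_mult)
    from sum_r_al_invariant[OF this] show ?thesis
      by (subst sum_list_map_swap) simp
  qed
  have L2: "(\<Sum>p\<leftarrow>r. \<Sum>q\<leftarrow>r. \<phi> (mu (al (fst p)) (fst q)) (be (snd q)) (mu (be (snd p)) (be a)))
    = (\<Sum>p\<leftarrow>r. \<Sum>q\<leftarrow>r. \<phi> (mu (al (fst p)) (al (fst q))) (be (al (snd q))) (mu (be (snd p)) (be a)))"
    using sum_r_al_invariant_nested[where \<phi>="\<lambda>p x y. \<phi> (mu (al (fst p)) x) (be y) (mu (be (snd p)) (be a))"]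
    by (simp add: bilinear_form_scI)
  have L3: "(\<Sum>p\<leftarrow>r. \<Sum>q\<leftarrow>r. \<phi> (al (fst q)) (mu (snd q) (mu a (fst p))) (be (be (snd p))))
    = (\<Sum>p\<leftarrow>r. \<Sum>q\<leftarrow>r. \<phi> (al (al (fst p))) (mu (mu (snd p) a) (fst q)) (be (snd q)))"
  proof -
    have "bilinear_form sc (\<lambda>x y. \<Sum>q\<leftarrow>r. \<phi> (al x) (mu y (mu a (fst q))) (be (be (snd q))))"
      by (rule bilinear_form_scI) (simp_all add: sum_list_addf sum_list_const_mult)
    from sum_r_al_invariant[OF this]
    have "(\<Sum>p\<leftarrow>r. \<Sum>q\<leftarrow>r. \<phi> (al (fst q)) (mu (snd q) (mu a (fst p))) (be (be (snd p))))
      = (\<Sum>p\<leftarrow>r. \<Sum>q\<leftarrow>r. \<phi> (al (al (fst p))) (mu (mu (snd p) a) (be (fst q))) (be (be (snd q))))"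
      by (subst sum_list_map_swap) (simp add: bihom_assoc)
    also have "\<dots> = (\<Sum>p\<leftarrow>r. \<Sum>q\<leftarrow>r. \<phi> (al (al (fst p))) (mu (mu (snd p) a) (fst q)) (be (snd q)))"
      using sum_r_be_invariant_nested[where \<phi>="\<lambda>p x y. \<phi> (al (al (fst p))) (mu (mu (snd p) a) x) (be y)"]
      by (simp add: bilinear_form_scI)
    finally show ?thesis .
  qed
  have L4: "(\<Sum>p\<leftarrow>r. \<Sum>q\<leftarrow>r. \<phi> (mu (mu a (fst p)) (fst q)) (be (snd q)) (be (be (snd p))))
    = (\<Sum>p\<leftarrow>r. \<Sum>q\<leftarrow>r. \<phi> (mu (al a) (mu (fst p) (fst q))) (be (be (snd q))) (be (be (snd p))))"
    using sum_r_be_invariant_nested[where \<phi>="\<lambda>p x y. \<phi> (mu (mu a (fst p)) x) (be y) (be (be (snd p)))"]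
    by (simp add: bilinear_form_scI bihom_assoc)
  show ?thesis
    by (simp add: eval3_def Delta_r_def act_left_def act_right_def r13r12_def r12r23_def sum_list_expand
        L1 L2 L3 L4)
qed

lemma eval3_Delta_coassoc_right:
  assumes \<phi>: "trilinear_form sc \<phi>"
  shows "eval3 \<phi> [(al x, u, v). (x, y) \<leftarrow> Delta a, (u, v) \<leftarrow> Delta y] =
    eval3 \<phi> (act_left mu al be a (r12r23 mu al be r)) - eval3 \<phi> (act_left mu al be a (r23r13 mu al be r))
    + eval3 \<phi> (act_right mu al be (r23r13 mu al be r) a)
    - eval3 \<phi> [(al (al x), mu (mu y a) u, be v). (x, y) \<leftarrow> r, (u, v) \<leftarrow> r]"
proof -
  note trilinear_formD[OF \<phi>, simp]
  have R1: "(\<Sum>p\<leftarrow>r. \<Sum>q\<leftarrow>r. \<phi> (al (al (fst p))) (al (fst q)) (mu (snd q) (mu (snd p) a)))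
    = (\<Sum>p\<leftarrow>r. \<Sum>q\<leftarrow>r. \<phi> (al (al (fst p))) (al (al (fst q))) (mu (mu (snd q) (snd p)) (be a)))"
    using sum_r_al_invariant_nested[where \<phi>="\<lambda>p x y. \<phi> (al (al (fst p))) (al x) (mu y (mu (snd p) a))"]
    by (simp add: bilinear_form_scI bihom_assoc)
  have R3: "(\<Sum>p\<leftarrow>r. \<Sum>q\<leftarrow>r. \<phi> (mu (al a) (al (fst p))) (al (fst q)) (mu (snd q) (be (snd p))))
    = (\<Sum>p\<leftarrow>r. \<Sum>q\<leftarrow>r. \<phi> (mu (al a) (al (fst p))) (be (al (fst q))) (mu (be (snd q)) (be (snd p))))"
    using sum_r_be_invariant_nested[where \<phi>="\<lambda>p x y. \<phi> (mu (al a) (al (fst p))) (al x) (mu y (be (snd p)))"]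
    by (simp add: bilinear_form_scI)
  have R4: "(\<Sum>p\<leftarrow>r. \<Sum>q\<leftarrow>r. \<phi> (mu (al a) (al (fst p))) (mu (be (snd p)) (fst q)) (be (snd q)))
    = (\<Sum>p\<leftarrow>r. \<Sum>q\<leftarrow>r. \<phi> (mu (al a) (al (fst p))) (mu (be (snd p)) (be (fst q))) (be (be (snd q))))"
    using sum_r_be_invariant_nested[where \<phi>="\<lambda>p x y. \<phi> (mu (al a) (al (fst p))) (mu (be (snd p)) x) (be y)"]
    by (simp add: bilinear_form_scI)
  show ?thesis
    by (simp add: eval3_def Delta_r_def act_left_def act_right_def r12r23_def r23r13_def sum_list_expand
        R1 R3 R4)
qed

lemma Delta_coassoc:
  "teq3 sc [(u, v, be y). (x, y) \<leftarrow> Delta a, (u, v) \<leftarrow> Delta x] [(al x, u, v). (x, y) \<leftarrow> Delta a, (u, v) \<leftarrow> Delta y]"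
  unfolding teq3_iff_eval3
proof (intro allI impI)
  fix \<phi> :: "'a \<Rightarrow> 'a \<Rightarrow> 'a \<Rightarrow> 'k"
  assume \<phi>: "trilinear_form sc \<phi>"
  have "eval3 \<phi> (act_left mu al be a (AYBE mu al be r)) = eval3 \<phi> (act_right mu al be (AYBE mu al be r) a)"
    using AYBE_balanced[of a] \<phi> by (simp add: teq3_iff_eval3)
  then show "eval3 \<phi> [(u, v, be y). (x, y) \<leftarrow> Delta a, (u, v) \<leftarrow> Delta x] =
      eval3 \<phi> [(al x, u, v). (x, y) \<leftarrow> Delta a, (u, v) \<leftarrow> Delta y]"
    unfolding eval3_Delta_coassoc_left[OF \<phi>] eval3_Delta_coassoc_right[OF \<phi>]
      eval3_act_left_AYBE[OF \<phi>] eval3_act_right_AYBE[OF \<phi>]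
    by (simp add: algebra_simps)
qed

lemma Delta_linear: "teq2 sc (Delta (sc c a + b)) ([(sc c x, y). (x, y) \<leftarrow> Delta a] @ Delta b)"
  unfolding teq2_def
proof (intro allI impI)
  fix \<phi> :: "'a \<Rightarrow> 'a \<Rightarrow> 'k"
  assume "bilinear_form sc \<phi>"
  note bilinear_formD[OF this, simp]
  show "(\<Sum>(x, y)\<leftarrow>Delta (sc c a + b). \<phi> x y) = (\<Sum>(x, y)\<leftarrow>[(sc c x, y). (x, y) \<leftarrow> Delta a] @ Delta b. \<phi> x y)"
    by (simp add: Delta_r_def sum_list_expand)
qed

lemma Delta_commute:
  assumes f_mu: "\<And>x y. f (mu x y) = mu (f x) (f y)"
    and f_neg: "\<And>x. f (- x) = - f x"
    and f_r: "teq2 sc [(f x, f y). (x, y) \<leftarrow> r] r"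
    and f_al: "\<And>x. f (al x) = al (f x)" and f_be: "\<And>x. f (be x) = be (f x)"
  shows "teq2 sc [(f x, f y). (x, y) \<leftarrow> Delta a] (Delta (f a))"
  unfolding teq2_def
proof (intro allI impI)
  fix \<phi> :: "'a \<Rightarrow> 'a \<Rightarrow> 'k"
  assume "bilinear_form sc \<phi>"
  note bilinear_formD[OF this, simp]
  have "bilinear_form sc (\<lambda>x y. \<phi> (al x) (mu y (f a)))" "bilinear_form sc (\<lambda>x y. \<phi> (mu (f a) x) (be y))"
    by (rule bilinear_form_scI; simp)+
  from this[THEN teq2_map_invariant[OF f_r]]
  show "(\<Sum>(x, y)\<leftarrow>[(f x, f y). (x, y) \<leftarrow> Delta a]. \<phi> x y) = (\<Sum>(x, y)\<leftarrow>Delta (f a). \<phi> x y)"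
    by (simp add: Delta_r_def sum_list_expand f_mu f_neg f_al f_be)
qed

lemma Delta_mu: "teq2 sc (Delta (mu a b))
    ([(mu (al a) b1, be b2). (b1, b2) \<leftarrow> Delta b] @ [(al a1, mu a2 (be b)). (a1, a2) \<leftarrow> Delta a])"
  unfolding teq2_def
proof (intro allI impI)
  fix \<phi> :: "'a \<Rightarrow> 'a \<Rightarrow> 'k"
  assume "bilinear_form sc \<phi>"
  note bilinear_formD[OF this, simp]
  have "bilinear_form sc (\<lambda>x y. \<phi> (al x) (mu y (mu a b)))" "bilinear_form sc (\<lambda>x y. \<phi> (mu (mu a b) x) (be y))"
    by (rule bilinear_form_scI; simp)+
  from this(1)[THEN sum_r_al_invariant] this(2)[THEN sum_r_be_invariant]
  show "(\<Sum>(x, y)\<leftarrow>Delta (mu a b). \<phi> x y) = (\<Sum>(x, y)\<leftarrow>[(mu (al a) b1, be b2). (b1, b2) \<leftarrow> Delta b]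
      @ [(al a1, mu a2 (be b)). (a1, a2) \<leftarrow> Delta a]. \<phi> x y)"
    by (simp add: Delta_r_def sum_list_expand bihom_assoc)
qed

end

theorem proposition5p5:
  fixes sc :: "'k::field \<Rightarrow> 'a::ab_group_add \<Rightarrow> 'a"
    and mu :: "'a \<Rightarrow> 'a \<Rightarrow> 'a" and al be :: "'a \<Rightarrow> 'a"
    and r :: "'a tensor2"
  assumes "bihom_assoc_algebra sc mu al be"
    and "teq2 sc [(al x, al y). (x,y) \<leftarrow> r] r"
    and "teq2 sc [(be x, be y). (x,y) \<leftarrow> r] r"
    and "\<And>a. teq3 sc (act_left mu al be a (AYBE mu al be r)) (act_right mu al be (AYBE mu al be r) a)"
  shows "inf_bihom_bialgebra sc mu (Delta_r mu al be r) al be be al"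
proof -
  interpret bihom_r_matrix sc mu al be r
    by (rule bihom_r_matrix.intro) (fact assms)+
  have "teq2 sc [(al x, al y). (x, y) \<leftarrow> Delta a] (Delta (al a))"
    and "teq2 sc [(be x, be y). (x, y) \<leftarrow> Delta a] (Delta (be a))" for a
    by (rule Delta_commute; simp add: assms)+
  then show ?thesis
    using assms(1) vector_space linear_maps Delta_linear Delta_mu Delta_coassoc
    unfolding inf_bihom_bialgebra_def bihom_coassoc_coalgebra_def
    by simp
qed

end
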